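(* Let $G(\circ)$, $G(\ast)$ be groups on a set $G$ of size $n$ and $a\in G$ with $\mathrm{dist}_a=2$. Then $\{|a|_\circ,|a|_\ast\}=\{n,n/2\}$.
   Context: $|a|_\circ$, $|a|_\ast$ are the orders of $a$ in $G(\circ)$, $G(\ast)$. $\mathrm{dist}_a=|\{b\in G: a\circ b\ne a\ast b\}|$. *)

theory Defs
  imports "HOL-Algebra.Multiplicative_Group"
begin

definition dist_elem :: "('a, 'b) monoid_scheme \<Rightarrow> ('a, 'c) monoid_scheme \<Rightarrow> 'a \<Rightarrow> nat" where
  "dist_elem G1 G2 a = card {b \<in> carrier G1. a \<otimes>\<^bsub>G1\<^esub> b \<noteq> a \<otimes>\<^bsub>G2\<^esub> b}"

end

theory Submission imports Defs begin

text \<open>Left multiplication by \<open>a\<close> in either group is a permutation of the carrier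
  all of whose cycles have length \<open>|a|\<close>, and a difference in exactly two places
  forces the second permutation to be the first one composed with the
  transposition of those two places. Composing with a transposition merges two
  cycles into one or splits one cycle into two. If \<open>b\<^sub>1, b\<^sub>2\<close> lie in different
  \<open>\<circ>\<close>-cycles, the merged cycle has length \<open>2|a|\<^sub>\<circ>\<close>; since all \<open>\<ast>\<close>-cycles have
  the same length, there is no room for a third \<open>\<circ>\<close>-cycle, so
  \<open>n = 2|a|\<^sub>\<circ> = |a|\<^sub>\<ast>\<close>. If they lie in the same \<open>\<circ>\<close>-cycle, they lie in
  different \<open>\<ast>\<close>-cycles and the same argument applies with the roles exchanged.\<close>

lemma funpow_eq_funpow_if_agree:
  assumes "\<And>i. i < j \<Longrightarrow> g ((f^^i) x) = f ((f^^i) x)"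
  shows "(g^^j) x = (f^^j) x"
  using assms by (induction j) auto

locale uniform_period_perm =
  fixes C :: "'a set" and f :: "'a \<Rightarrow> 'a" and k :: nat
  assumes finite_C: "finite C"
    and maps_to: "x \<in> C \<Longrightarrow> f x \<in> C"
    and inj: "inj_on f C"
    and period: "x \<in> C \<Longrightarrow> (f^^j) x = x \<longleftrightarrow> k dvd j"
    and period_pos: "0 < k"
begin

lemma funpow_closed: "x \<in> C \<Longrightarrow> (f^^j) x \<in> C"
  by (induction j) (auto intro: maps_to)

lemma funpow_mod_period:
  assumes "x \<in> C" shows "(f^^(j mod k)) x = (f^^j) x"
proof -
  have "(f^^(k * (j div k))) x = x" using period[OF assms] by simp
  then have "(f^^j) x = (f^^(j mod k)) ((f^^(k * (j div k))) x)"
    by (metis comp_apply funpow_add mod_mult_div_eq)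
  with \<open>(f^^(k * (j div k))) x = x\<close> show ?thesis by simp
qed

lemma funpow_neq_self: "x \<in> C \<Longrightarrow> 0 < j \<Longrightarrow> j < k \<Longrightarrow> (f^^j) x \<noteq> x"
  using period dvd_imp_le leD by blast

lemma funpow_inj_below_period:
  assumes x: "x \<in> C" and "r < k" "s < k" "(f^^r) x = (f^^s) x"
  shows "r = s"
proof -
  have no_repeat: False if "r < s" "s < k" "(f^^r) x = (f^^s) x" for r s
  proof -
    have "(f^^(k - s + r)) x = (f^^(k - s)) ((f^^r) x)" by (simp only: funpow_add comp_apply)
    also have "\<dots> = (f^^(k - s)) ((f^^s) x)" using that by simp
    also have "\<dots> = (f^^(k - s + s)) x" by (simp only: funpow_add comp_apply)
    also have "\<dots> = x" using period[OF x, of "k - s + s"] \<open>s < k\<close> by simp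
    finally have "(f^^(k - s + r)) x = x" .
    moreover have "0 < k - s + r" "k - s + r < k" using that by auto
    ultimately show False using funpow_neq_self[OF x, of "k - s + r"] by simp
  qed
  show ?thesis
  proof (rule ccontr)
    assume "r \<noteq> s"
    then consider "r < s" | "s < r" by linarith
    then show False using no_repeat[of r s] no_repeat[of s r] assms by cases simp_all
  qed
qed

lemma funpow_return:
  assumes x: "x \<in> C" and y: "(f^^i) x = y"
  shows "\<exists>j<k. (f^^j) y = x"
proof -
  have "(f^^(k - i mod k)) y = (f^^(k - i mod k)) ((f^^(i mod k)) x)"
    using funpow_mod_period[OF x] y by simp
  also have "\<dots> = (f^^(k - i mod k + i mod k)) x" by (simp add: funpow_add)
  also have "\<dots> = x" using period[OF x, of "k - i mod k + i mod k"] period_pos by simp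
  finally have "(f^^((k - i mod k) mod k)) y = x"
    using funpow_mod_period funpow_closed[OF x] y by metis
  then show ?thesis using period_pos mod_less_divisor by blast
qed

lemma period_le_card:
  assumes x: "x \<in> C" shows "k \<le> card C"
proof -
  have "inj_on (\<lambda>j. (f^^j) x) {..<k}"
    using funpow_inj_below_period[OF x] by (auto intro: inj_onI)
  then have "card ((\<lambda>j. (f^^j) x) ` {..<k}) = k" by (simp add: card_image)
  moreover have "(\<lambda>j. (f^^j) x) ` {..<k} \<subseteq> C" using funpow_closed[OF x] by blast
  ultimately show ?thesis using card_mono[OF finite_C] by metis
qed

end

text \<open>\<open>g\<close> agrees with \<open>f\<close> except at \<open>b\<^sub>1\<close> and \<open>b\<^sub>2\<close>, where (by \<open>g_b1\<close>, \<open>g_b2\<close>)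
  the two values are exchanged: \<open>g = f \<circ> (b\<^sub>1 b\<^sub>2)\<close>.\<close>
locale transposition_twist =
  f: uniform_period_perm C f k + g: uniform_period_perm C g m
  for C f k g m +
  fixes b1 b2
  assumes distinct: "b1 \<noteq> b2"
    and differ: "{x \<in> C. f x \<noteq> g x} = {b1, b2}"
begin

lemma differ_iff:
  assumes "x \<in> C" shows "f x \<noteq> g x \<longleftrightarrow> x = b1 \<or> x = b2"
proof -
  have "f x \<noteq> g x \<longleftrightarrow> x \<in> {x \<in> C. f x \<noteq> g x}" using assms by simp
  also have "\<dots> \<longleftrightarrow> x = b1 \<or> x = b2" unfolding differ by simp
  finally show ?thesis .
qed

lemma b1_in_C: "b1 \<in> C" and b2_in_C: "b2 \<in> C"
proof -
  have "{b1, b2} \<subseteq> C" unfolding differ[symmetric] by blast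
  then show "b1 \<in> C" "b2 \<in> C" by simp_all
qed

lemma agree_off:
  assumes "x \<in> C" "x \<noteq> b1" "x \<noteq> b2" shows "g x = f x"
  using differ_iff[OF assms(1)] assms(2,3) by auto

lemma swap_points: "transposition_twist C f k g m b2 b1"
proof unfold_locales
  show "b2 \<noteq> b1" using distinct by simp
  show "{x \<in> C. f x \<noteq> g x} = {b2, b1}" using differ by (simp only: insert_commute)
qed

lemma swap_maps: "transposition_twist C g m f k b1 b2"
proof unfold_locales
  show "b1 \<noteq> b2" using distinct .
  have "{x \<in> C. g x \<noteq> f x} = {x \<in> C. f x \<noteq> g x}" by (rule Collect_cong) auto
  with differ show "{x \<in> C. g x \<noteq> f x} = {b1, b2}" by simp
qed

lemma g_b1: "g b1 = f b2"
proof -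
  have "f ` C = C"
    by (rule endo_inj_surj[OF f.finite_C _ f.inj]) (auto intro: f.maps_to)
  then have "g b1 \<in> f ` C" using g.maps_to[OF b1_in_C] by simp
  then obtain y where y: "y \<in> C" "f y = g b1" by (metis imageE)
  have "y \<noteq> b1" using y(2) differ_iff[OF b1_in_C] by auto
  have "y = b2"
  proof (rule ccontr)
    assume "y \<noteq> b2"
    then have "g y = g b1" using agree_off[OF y(1) \<open>y \<noteq> b1\<close>] y(2) by simp
    then show False using inj_onD[OF g.inj _ y(1) b1_in_C] \<open>y \<noteq> b1\<close> by blast
  qed
  with y(2) show ?thesis by simp
qed

lemma g_b2: "g b2 = f b1"
  using transposition_twist.g_b1[OF swap_points] .

lemma g_funpow_eq_f_funpow:
  assumes "x \<in> C" and "\<And>i. i < j \<Longrightarrow> (f^^i) x \<noteq> b1 \<and> (f^^i) x \<noteq> b2"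
  shows "(g^^j) x = (f^^j) x"
proof (rule funpow_eq_funpow_if_agree)
  fix i assume "i < j"
  then show "g ((f^^i) x) = f ((f^^i) x)"
    using assms by (simp add: agree_off f.funpow_closed)
qed

lemma separated_sym:
  assumes "\<forall>j. (f^^j) b1 \<noteq> b2" shows "\<forall>j. (f^^j) b2 \<noteq> b1"
proof (intro allI notI)
  fix j assume "(f^^j) b2 = b1"
  then obtain i where "(f^^i) b1 = b2" using f.funpow_return[OF b2_in_C] by blast
  with assms show False by blast
qed

lemma g_funpow_f_b2_below:
  assumes sep: "\<forall>j. (f^^j) b2 \<noteq> b1" and "j < k"
  shows "(g^^j) (f b2) = (f^^j) (f b2)"
proof (rule g_funpow_eq_f_funpow)
  show "f b2 \<in> C" using f.maps_to[OF b2_in_C] .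
  fix i assume "i < j"
  have "(f^^i) (f b2) = (f^^Suc i) b2" by (simp add: funpow_swap1)
  moreover have "(f^^Suc i) b2 \<noteq> b2"
    using \<open>i < j\<close> \<open>j < k\<close> by (intro f.funpow_neq_self[OF b2_in_C]) simp_all
  ultimately show "(f^^i) (f b2) \<noteq> b1 \<and> (f^^i) (f b2) \<noteq> b2" using sep by metis
qed

lemma g_funpow_f_b2_period:
  assumes sep: "\<forall>j. (f^^j) b2 \<noteq> b1"
  shows "(g^^k) (f b2) = f b1"
proof -
  have k: "k = Suc (k - 1)" using f.period_pos by simp
  have "(g^^k) (f b2) = g ((g^^(k - 1)) (f b2))" by (subst k) simp
  also have "\<dots> = g ((f^^(k - 1)) (f b2))"
    using g_funpow_f_b2_below[OF sep] f.period_pos by simp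
  also have "(f^^(k - 1)) (f b2) = (f^^k) b2" by (subst (2) k) (simp add: funpow_swap1)
  also have "\<dots> = b2" using f.period[OF b2_in_C] by simp
  finally show ?thesis using g_b2 by simp
qed

lemma g_period_double:
  assumes sep: "\<forall>j. (f^^j) b1 \<noteq> b2"
  shows "m = 2 * k"
proof -
  note sep' = separated_sym[OF sep]
  note from_b1 = transposition_twist.g_funpow_f_b2_below[OF swap_points sep]
  have x: "f b2 \<in> C" using f.maps_to[OF b2_in_C] .
  have "(g^^(k + k)) (f b2) = (g^^k) ((g^^k) (f b2))" by (simp only: funpow_add comp_apply)
  also have "\<dots> = f b2"
    using g_funpow_f_b2_period[OF sep']
      transposition_twist.g_funpow_f_b2_period[OF swap_points sep] by simp
  finally have "m dvd 2 * k" using g.period[OF x] by (simp add: mult_2)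
  then have "m \<le> 2 * k" using f.period_pos by (simp add: dvd_imp_le)
  moreover have "\<not> m < 2 * k"
  proof
    assume "m < 2 * k"
    have returns: "(g^^m) (f b2) = f b2" using g.period[OF x] by simp
    show False
    proof (cases "m < k")
      case True
      then have "(f^^m) (f b2) = f b2" using returns g_funpow_f_b2_below[OF sep'] by simp
      with f.funpow_neq_self[OF x g.period_pos True] show False by contradiction
    next
      case False
      define j where "j = m - k"
      have "j < k" and m: "m = j + k" using \<open>m < 2 * k\<close> False by (auto simp: j_def)
      have "f b2 = (g^^j) ((g^^k) (f b2))"
        using returns unfolding m funpow_add comp_apply by (rule sym)
      also have "(g^^k) (f b2) = f b1" by (rule g_funpow_f_b2_period[OF sep'])
      also have "(g^^j) (f b1) = (f^^j) (f b1)" by (rule from_b1[OF \<open>j < k\<close>])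
      also have "\<dots> = f ((f^^j) b1)" by (rule funpow_swap1[symmetric])
      finally have "(f^^j) b1 = b2"
        by (rule inj_onD[OF f.inj _ f.funpow_closed[OF b1_in_C] b2_in_C, OF sym])
      with sep show False by blast
    qed
  qed
  ultimately show ?thesis by simp
qed

lemma card_le_double:
  assumes sep: "\<forall>j. (f^^j) b1 \<noteq> b2"
  shows "card C \<le> 2 * k"
proof -
  define orbit where "orbit b = (\<lambda>j. (f^^j) b) ` {..<k}" for b
  have "C \<subseteq> orbit b1 \<union> orbit b2"
  proof
    fix y assume y: "y \<in> C"
    show "y \<in> orbit b1 \<union> orbit b2"
    proof (rule ccontr)
      assume "y \<notin> orbit b1 \<union> orbit b2"
      have "(f^^i) y \<noteq> b" if "b = b1 \<or> b = b2" for i b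
      proof
        assume "(f^^i) y = b"
        then obtain j where "j < k" "(f^^j) b = y" using f.funpow_return[OF y] by blast
        with \<open>y \<notin> orbit b1 \<union> orbit b2\<close> that show False unfolding orbit_def by blast
      qed
      then have "(g^^k) y = (f^^k) y" by (intro g_funpow_eq_f_funpow[OF y]) blast
      then have "(g^^k) y = y" using f.period[OF y] by simp
      then have "m dvd k" using g.period[OF y] by simp
      then show False
        using g_period_double[OF sep] f.period_pos by (auto dest: dvd_imp_le)
    qed
  qed
  then have "card C \<le> card (orbit b1 \<union> orbit b2)"
    by (intro card_mono) (simp_all add: orbit_def)
  also have "\<dots> \<le> card (orbit b1) + card (orbit b2)" by (rule card_Un_le)
  also have "\<dots> \<le> 2 * k"
  proof -
    have "card (orbit b) \<le> k" for b
      unfolding orbit_def by (metis card_image_le card_lessThan finite_lessThan)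
    then show ?thesis by (simp add: mult_2 add_mono)
  qed
  finally show ?thesis .
qed

text \<open>If \<open>b\<^sub>2 = f\<^sup>i b\<^sub>1\<close> with \<open>0 < i < k\<close>, the \<open>g\<close>-orbit of \<open>b\<^sub>1\<close> is the arc
  \<open>f\<^sup>p b\<^sub>1\<close>, \<open>i < p \<le> k\<close>: from \<open>b\<^sub>1 = f\<^sup>k b\<^sub>1\<close> the map \<open>g\<close> jumps to \<open>f b\<^sub>2 = f\<^sup>i\<^sup>+\<^sup>1 b\<^sub>1\<close>,
  skipping \<open>b\<^sub>2\<close>.\<close>

lemma g_orbit_b1_in_arc:
  assumes i: "(f^^i) b1 = b2" "i < k"
  shows "\<exists>p. i < p \<and> p \<le> k \<and> (g^^j) b1 = (f^^p) b1"
proof (induction j)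
  case 0
  show ?case using f.period[OF b1_in_C, of k] i(2) by (intro exI[of _ k]) simp
next
  case (Suc j)
  then obtain p where p: "i < p" "p \<le> k" "(g^^j) b1 = (f^^p) b1" by blast
  show ?case
  proof (cases "p = k")
    case True
    then have "(g^^Suc j) b1 = (f^^Suc i) b1"
      using p(3) f.period[OF b1_in_C, of k] g_b1 i(1) by simp
    then show ?thesis using i(2) by (intro exI[of _ "Suc i"]) simp
  next
    case False
    have "(f^^p) b1 \<noteq> b1" using f.funpow_neq_self[OF b1_in_C] p False by simp
    moreover have "(f^^p) b1 \<noteq> b2"
      using f.funpow_inj_below_period[OF b1_in_C, of i p] i p False by auto
    ultimately have "(g^^Suc j) b1 = (f^^Suc p) b1"
      using p(3) agree_off f.funpow_closed[OF b1_in_C] by simp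
    then show ?thesis using p False by (intro exI[of _ "Suc p"]) simp
  qed
qed

lemma g_separated_if_f_joined:
  assumes "(f^^i) b1 = b2" shows "\<forall>j. (g^^j) b1 \<noteq> b2"
proof (intro allI notI)
  fix j assume "(g^^j) b1 = b2"
  have i: "(f^^(i mod k)) b1 = b2" "i mod k < k"
    using assms f.funpow_mod_period[OF b1_in_C] f.period_pos by auto
  then obtain p where p: "i mod k < p" "p \<le> k" "(f^^p) b1 = b2"
    using g_orbit_b1_in_arc \<open>(g^^j) b1 = b2\<close> by metis
  show False
  proof (cases "p = k")
    case True
    then show False using p(3) f.period[OF b1_in_C, of k] distinct by simp
  next
    case False
    then show False
      using f.funpow_inj_below_period[OF b1_in_C, of "i mod k" p] i p by auto
  qed
qed

lemma periods_eq_card_and_half: "{k, m} = {card C, card C div 2}"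
proof (cases "\<forall>j. (f^^j) b1 \<noteq> b2")
  case True
  have "m = 2 * k" using g_period_double[OF True] .
  moreover have "card C = m"
    using card_le_double[OF True] g.period_le_card[OF b1_in_C] \<open>m = 2 * k\<close> by simp
  ultimately show ?thesis by auto
next
  case False
  then obtain i where "(f^^i) b1 = b2" by blast
  note sep = g_separated_if_f_joined[OF this]
  have "k = 2 * m" using transposition_twist.g_period_double[OF swap_maps sep] .
  moreover have "card C = k"
    using transposition_twist.card_le_double[OF swap_maps sep] f.period_le_card[OF b1_in_C]
      \<open>k = 2 * m\<close> by simp
  ultimately show ?thesis by auto
qed

end

lemma (in group) left_mult_funpow:
  assumes "a \<in> carrier G" "x \<in> carrier G"
  shows "((\<lambda>y. a \<otimes> y)^^j) x = a [^] j \<otimes> x"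
proof (induction j)
  case (Suc j)
  then have "((\<lambda>y. a \<otimes> y)^^Suc j) x = a \<otimes> (a [^] j \<otimes> x)" by simp
  also have "\<dots> = (a \<otimes> a [^] j) \<otimes> x" using assms by (simp add: m_assoc)
  also have "a \<otimes> a [^] j = a [^] Suc j" using assms(1) by (rule nat_pow_Suc2[symmetric])
  finally show ?case .
qed (use assms in simp)

lemma (in group) left_mult_uniform_period:
  assumes "finite (carrier G)" "a \<in> carrier G"
  shows "uniform_period_perm (carrier G) (\<lambda>x. a \<otimes> x) (ord a)"
proof
  show "finite (carrier G)" using assms(1) .
  show "0 < ord a" using ord_ge_1[OF assms] by simp
  show "a \<otimes> x \<in> carrier G" if "x \<in> carrier G" for x using assms that by simp
  show "inj_on (\<lambda>x. a \<otimes> x) (carrier G)" using assms by (auto intro: inj_onI)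
  fix x j assume x: "x \<in> carrier G"
  have "((\<lambda>y. a \<otimes> y)^^j) x = x \<longleftrightarrow> a [^] j = \<one>"
    using left_mult_funpow[OF assms(2) x] r_cancel_one[OF x] assms(2) by simp
  also have "\<dots> \<longleftrightarrow> ord a dvd j" using pow_eq_id[OF assms(2)] .
  finally show "((\<lambda>y. a \<otimes> y)^^j) x = x \<longleftrightarrow> ord a dvd j" .
qed

theorem proposition4p14:
  fixes G1 G2 :: "'a monoid" and a :: 'a and n :: nat
  assumes "group G1" and "group G2"
    and "carrier G2 = carrier G1"
    and "finite (carrier G1)" and "card (carrier G1) = n"
    and "a \<in> carrier G1"
    and "dist_elem G1 G2 a = 2"
  shows "{group.ord G1 a, group.ord G2 a} = {n, n div 2}"
proof -
  have perm1: "uniform_period_perm (carrier G1) (\<lambda>x. a \<otimes>\<^bsub>G1\<^esub> x) (group.ord G1 a)"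
    using group.left_mult_uniform_period[OF assms(1,4,6)] .
  have perm2: "uniform_period_perm (carrier G1) (\<lambda>x. a \<otimes>\<^bsub>G2\<^esub> x) (group.ord G2 a)"
    using group.left_mult_uniform_period[OF assms(2)] assms(3,4,6) by simp
  obtain b1 b2 where "b1 \<noteq> b2"
    and "{x \<in> carrier G1. a \<otimes>\<^bsub>G1\<^esub> x \<noteq> a \<otimes>\<^bsub>G2\<^esub> x} = {b1, b2}"
    using assms(7) unfolding dist_elem_def card_2_iff by blast
  then have "transposition_twist (carrier G1) (\<lambda>x. a \<otimes>\<^bsub>G1\<^esub> x) (group.ord G1 a)
      (\<lambda>x. a \<otimes>\<^bsub>G2\<^esub> x) (group.ord G2 a) b1 b2"
    using perm1 perm2 by (simp add: transposition_twist_def transposition_twist_axioms_def)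
  then show ?thesis using transposition_twist.periods_eq_card_and_half assms(5) by metis
qed

end
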